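(* Let $X$ be a compact metric countable space and $f:X\to X$ a continuous function such that $(X,f)$ is transitive. If there is $m\in\mathbb N$ such that $|\omega_f(x)|\le m$ for every accumulation point $x$ of $X$, then the Ellis semigroup $E(X,f)$ is countable.
   Context: $(X,f)$ is transitive if some point has dense orbit $\{f^n(x):n\in\mathbb N\}$. The Ellis semigroup $E(X,f)$ is the closure of $\{f^n:n\in\mathbb N\}$ in $X^X$ with the product (pointwise) topology. The $\omega$-limit set $\omega_f(x)$ is the set of $y$ with $f^{n_k}(x)\to y$ for some strictly increasing sequence $(n_k)$. An accumulation point is a non-isolated point. *)

theory Defs
  imports "HOL-Analysis.Analysis"
begin

definition transitive_system :: "'a::topological_space set \<Rightarrow> ('a \<Rightarrow> 'a) \<Rightarrow> bool" where
  "transitive_system X f \<longleftrightarrow> (\<exists>x\<in>X. closure {(f ^^ n) x | n. True} = closure X)"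

definition omega_limit :: "('a::topological_space \<Rightarrow> 'a) \<Rightarrow> 'a \<Rightarrow> 'a set" where
  "omega_limit f x = {y. \<exists>r. strict_mono r \<and> (\<lambda>k. (f ^^ (r k)) x) \<longlonglongrightarrow> y}"

definition ellis_semigroup :: "'a::topological_space set \<Rightarrow> ('a \<Rightarrow> 'a) \<Rightarrow> ('a \<Rightarrow> 'a) set" where
  "ellis_semigroup X f =
     (product_topology (\<lambda>_. top_of_set X) X) closure_of {restrict (f ^^ n) X | n. True}"

end

theory Submission
  imports Defs
begin

text \<open>
  Let \<open>x0\<close> be a point with dense orbit. An isolated point of \<open>X\<close> lies in the closure of
  that orbit without being a limit point of it, so it lies on the orbit; since every
  \<open>p \<in> E(X,f)\<close> commutes with the iterates of \<open>f\<close>, \<open>p\<close> is determined there by \<open>p x0\<close>.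
  At an accumulation point \<open>z\<close> the set \<open>\<omega>(z)\<close> is finite, invariant and has at most
  \<open>m\<close> points. Its points are uniformly separated, so uniform continuity forces the
  orbit of \<open>z\<close> to be eventually shadowed by an orbit in \<open>\<omega>(z)\<close>, which is periodic
  with period dividing \<open>m!\<close>; hence \<open>f\<^bsup>m! k\<^esup> z\<close> converges. An element \<open>p\<close> of
  \<open>E(X,f)\<close> that is not an iterate is a pointwise limit of iterates \<open>f\<^bsup>n\<^esup>\<close>
  with \<open>n \<rightarrow> \<infinity>\<close> inside one residue class \<open>i\<close> mod \<open>m!\<close>, so
  \<open>p z = f\<^bsup>i\<^esup> (lim\<^sub>k f\<^bsup>m! k\<^esup> z)\<close>. Thus \<open>p\<close> is either an iterate or is determined
  by the pair \<open>(p x0, i) \<in> X \<times> {..<m!}\<close>; as \<open>X\<close> is countable, so is \<open>E(X,f)\<close>.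
\<close>

lemma funpow_mem_invariant:
  assumes "f ` X \<subseteq> X" "x \<in> X"
  shows "(f ^^ n) x \<in> X"
  using assms by (induction n) auto

lemma continuous_map_funpow:
  assumes "continuous_map X X f"
  shows "continuous_map X X (f ^^ n)"
proof (induction n)
  case (Suc n)
  show ?case
    using continuous_map_compose[OF Suc assms] by (simp add: o_def)
qed simp

lemma funpow_add_mult_eq_of_period:
  fixes \<phi> :: "'a \<Rightarrow> 'a"
  assumes period: "(\<phi> ^^ (i + q)) w = (\<phi> ^^ i) w" and "i \<le> n"
  shows "(\<phi> ^^ (n + q * t)) w = (\<phi> ^^ n) w"
proof (induction t)
  case (Suc t)
  have "n + q * Suc t = (n + q * t - i) + (i + q)" "n + q * t = (n + q * t - i) + i"
    using \<open>i \<le> n\<close> by simp_all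
  then have "(\<phi> ^^ (n + q * Suc t)) w = (\<phi> ^^ (n + q * t)) w"
    by (metis comp_apply funpow_add period)
  then show ?case
    using Suc by simp
qed simp

lemma funpow_add_fact_mult_eq:
  fixes \<phi> :: "'a \<Rightarrow> 'a"
  assumes "finite W" "card W \<le> m" "\<phi> ` W \<subseteq> W" "w \<in> W" "m \<le> n"
  shows "(\<phi> ^^ (n + fact m * t)) w = (\<phi> ^^ n) w"
proof -
  have orbit_in_W: "(\<lambda>j. (\<phi> ^^ j) w) ` {0..m} \<subseteq> W"
    using funpow_mem_invariant[OF assms(3,4)] by blast
  have "\<not> inj_on (\<lambda>j. (\<phi> ^^ j) w) {0..m}"
    using card_inj_on_le[OF _ orbit_in_W assms(1)] assms(2) by auto
  then obtain i j where ij: "i < j" "j \<le> m" "(\<phi> ^^ j) w = (\<phi> ^^ i) w"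
    unfolding inj_on_def by (metis atLeastAtMost_iff linorder_neqE_nat)
  then have period: "(\<phi> ^^ (i + (j - i))) w = (\<phi> ^^ i) w"
    by simp
  have "j - i dvd fact m"
    using ij by (intro dvd_fact) auto
  then obtain c where "fact m = (j - i) * c"
    unfolding dvd_def by blast
  then show ?thesis
    using funpow_add_mult_eq_of_period[OF period, of n "c * t"] ij assms(5)
    by (simp add: mult.assoc)
qed

lemma finite_uniformly_discrete:
  fixes W :: "'a::metric_space set"
  assumes "finite W"
  obtains \<delta> where "\<delta> > 0" "\<And>u v. u \<in> W \<Longrightarrow> v \<in> W \<Longrightarrow> dist u v < \<delta> \<Longrightarrow> u = v"
proof -
  define D where "D = insert 1 {dist u v | u v. u \<in> W \<and> v \<in> W \<and> u \<noteq> v}"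
  have "finite D"
  proof -
    have "{dist u v | u v. u \<in> W \<and> v \<in> W \<and> u \<noteq> v} \<subseteq> (\<lambda>(u, v). dist u v) ` (W \<times> W)"
      by auto
    then show ?thesis
      unfolding D_def using assms by (simp add: finite_subset)
  qed
  then have "Min D \<in> D"
    unfolding D_def by (intro Min_in) auto
  then have "Min D > 0"
    unfolding D_def by auto
  moreover have "u = v" if "u \<in> W" "v \<in> W" "dist u v < Min D" for u v
  proof (rule ccontr)
    assume "u \<noteq> v"
    then have "dist u v \<in> D"
      unfolding D_def using that(1,2) by blast
    then have "Min D \<le> dist u v"
      by (rule Min_le[OF \<open>finite D\<close>])
    then show False
      using that(3) by simp
  qed
  ultimately show ?thesis
    using that by blast
qed

lemma omega_limit_subset:
  assumes "closed X" "f ` X \<subseteq> X" "z \<in> X"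
  shows "omega_limit f z \<subseteq> X"
proof
  fix y assume "y \<in> omega_limit f z"
  then obtain r where "(\<lambda>k. (f ^^ r k) z) \<longlonglongrightarrow> y"
    unfolding omega_limit_def by blast
  then show "y \<in> X"
    by (rule closed_sequentially[OF assms(1) funpow_mem_invariant[OF assms(2,3)]])
qed

lemma omega_limit_invariant:
  assumes "closed X" "f ` X \<subseteq> X" "continuous_on X f" "z \<in> X"
  shows "f ` omega_limit f z \<subseteq> omega_limit f z"
proof
  fix u assume "u \<in> f ` omega_limit f z"
  then obtain y r where u: "u = f y" and r: "strict_mono r" "(\<lambda>k. (f ^^ r k) z) \<longlonglongrightarrow> y"
    unfolding omega_limit_def by blast
  have "y \<in> X"
    using omega_limit_subset[OF assms(1,2,4)] r unfolding omega_limit_def by blast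
  then have "(\<lambda>k. (f ^^ Suc (r k)) z) \<longlonglongrightarrow> u"
    using continuous_on_tendsto_compose[OF assms(3) r(2)] funpow_mem_invariant[OF assms(2,4)] u
    by simp
  moreover have "strict_mono (Suc \<circ> r)"
    using r(1) by (simp add: strict_mono_def)
  ultimately show "u \<in> omega_limit f z"
    unfolding omega_limit_def comp_def by blast
qed

lemma eventually_near_omega_limit:
  assumes "compact X" "f ` X \<subseteq> X" "z \<in> X" "e > 0"
  shows "\<forall>\<^sub>F n in sequentially. \<exists>w\<in>omega_limit f z. dist ((f ^^ n) z) w < e"
proof (rule ccontr)
  assume "\<not> ?thesis"
  then have far: "infinite {n. \<forall>w\<in>omega_limit f z. e \<le> dist ((f ^^ n) z) w}"
    by (simp add: not_eventually not_less frequently_cofinite flip: cofinite_eq_sequentially)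
  obtain r :: "nat \<Rightarrow> nat"
    where r: "strict_mono r" "\<And>k. \<forall>w\<in>omega_limit f z. e \<le> dist ((f ^^ r k) z) w"
    using infinite_enumerate[OF far] by blast
  obtain l and s :: "nat \<Rightarrow> nat"
    where "strict_mono s" and lim: "((\<lambda>k. (f ^^ r k) z) \<circ> s) \<longlonglongrightarrow> l"
    using compact_imp_seq_compact[OF assms(1)] funpow_mem_invariant[OF assms(2,3)]
    unfolding seq_compact_def by (metis (no_types, lifting))
  then have "l \<in> omega_limit f z"
    using r(1) strict_mono_o unfolding omega_limit_def comp_def by blast
  moreover obtain k where "dist ((f ^^ r (s k)) z) l < e"
    using eventually_happens'[OF _ tendstoD[OF lim assms(4)]] by auto
  ultimately show False
    using r(2) by (meson not_le)
qed

lemma omega_limit_shadowing: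
  fixes X :: "'a::metric_space set"
  assumes "compact X" "f ` X \<subseteq> X" "continuous_on X f" "z \<in> X"
    and "finite (omega_limit f z)" "e > 0"
  obtains N w where "w \<in> omega_limit f z" "\<And>j. dist ((f ^^ (N + j)) z) ((f ^^ j) w) < e"
proof -
  let ?W = "omega_limit f z"
  have W_sub: "?W \<subseteq> X"
    using omega_limit_subset[OF compact_imp_closed assms(2,4)] assms(1) by blast
  obtain \<delta> where "\<delta> > 0" and \<delta>: "\<And>u v. u \<in> ?W \<Longrightarrow> v \<in> ?W \<Longrightarrow> dist u v < \<delta> \<Longrightarrow> u = v"
    using finite_uniformly_discrete[OF assms(5)] by blast
  obtain \<eta> where "\<eta> > 0" "\<eta> \<le> e" "\<eta> \<le> \<delta> / 2"
    and \<eta>: "\<And>u v. u \<in> X \<Longrightarrow> v \<in> X \<Longrightarrow> dist v u < \<eta> \<Longrightarrow> dist (f v) (f u) < \<delta> / 2"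
  proof -
    obtain d where "d > 0" and d: "\<forall>u\<in>X. \<forall>v\<in>X. dist v u < d \<longrightarrow> dist (f v) (f u) < \<delta> / 2"
      using compact_uniformly_continuous[OF assms(3,1)] \<open>\<delta> > 0\<close>
      unfolding uniformly_continuous_on_def by (meson half_gt_zero)
    show ?thesis
      by (rule that[of "min d (min e (\<delta> / 2))"]) (use \<open>d > 0\<close> \<open>e > 0\<close> \<open>\<delta> > 0\<close> d in auto)
  qed
  obtain N where "\<And>n. N \<le> n \<Longrightarrow> \<exists>w\<in>?W. dist ((f ^^ n) z) w < \<eta>"
    using eventually_near_omega_limit[OF assms(1,2,4) \<open>\<eta> > 0\<close>]
    unfolding eventually_sequentially by blast
  then obtain w where w: "\<And>n. N \<le> n \<Longrightarrow> w n \<in> ?W" "\<And>n. N \<le> n \<Longrightarrow> dist ((f ^^ n) z) (w n) < \<eta>"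
    by metis
  have w_Suc: "w (Suc n) = f (w n)" if "N \<le> n" for n
  proof (rule \<delta>)
    show "w (Suc n) \<in> ?W"
      using w(1) that by simp
    show "f (w n) \<in> ?W"
      using omega_limit_invariant[OF compact_imp_closed assms(2,3,4)] assms(1) w(1)[OF that]
      by blast
    have "dist (f ((f ^^ n) z)) (f (w n)) < \<delta> / 2"
      using \<eta> w[OF that] W_sub funpow_mem_invariant[OF assms(2,4)] by blast
    moreover have "dist ((f ^^ Suc n) z) (w (Suc n)) < \<delta> / 2"
      using w(2)[of "Suc n"] that \<open>\<eta> \<le> \<delta> / 2\<close> by simp
    moreover have "dist (w (Suc n)) (f (w n))
        \<le> dist (w (Suc n)) ((f ^^ Suc n) z) + dist ((f ^^ Suc n) z) (f (w n))"
      by (rule dist_triangle)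
    ultimately show "dist (w (Suc n)) (f (w n)) < \<delta>"
      by (simp add: dist_commute)
  qed
  have w_orbit: "w (N + j) = (f ^^ j) (w N)" for j
    by (induction j) (simp_all add: w_Suc)
  have "dist ((f ^^ (N + j)) z) ((f ^^ j) (w N)) < e" for j
    using w(2)[of "N + j"] \<open>\<eta> \<le> e\<close> unfolding w_orbit by simp
  then show ?thesis
    using that w(1) by blast
qed

lemma convergent_funpow_fact_mult:
  fixes X :: "'a::metric_space set"
  assumes "compact X" "f ` X \<subseteq> X" "continuous_on X f" "z \<in> X"
    and "finite (omega_limit f z)" "card (omega_limit f z) \<le> m"
  obtains l where "l \<in> X" "(\<lambda>k. (f ^^ (fact m * k)) z) \<longlonglongrightarrow> l"
proof -
  have invariant: "f ` omega_limit f z \<subseteq> omega_limit f z"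
    using omega_limit_invariant[OF compact_imp_closed[OF assms(1)] assms(2-4)] .
  have "Cauchy (\<lambda>k. (f ^^ (fact m * k)) z)"
  proof (rule metric_CauchyI)
    fix e :: real
    assume "e > 0"
    then obtain N w where "w \<in> omega_limit f z"
      and w: "\<And>j. dist ((f ^^ (N + j)) z) ((f ^^ j) w) < e / 2"
      by (rule omega_limit_shadowing[OF assms(1-5) half_gt_zero]) blast
    define K where "K = N + m"
    have "K \<le> fact m * K"
      by simp
    have near: "dist ((f ^^ (fact m * k)) z) ((f ^^ (fact m * K - N)) w) < e / 2" if "K \<le> k" for k
    proof -
      have "fact m * (k - K) = fact m * k - fact m * K" "fact m * K \<le> fact m * k"
        using that by (simp_all add: right_diff_distrib')
      then have k: "fact m * k = N + ((fact m * K - N) + fact m * (k - K))"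
        using \<open>K \<le> fact m * K\<close> unfolding K_def by linarith
      have "m \<le> fact m * K - N"
        using \<open>K \<le> fact m * K\<close> unfolding K_def by linarith
      then have "(f ^^ ((fact m * K - N) + fact m * (k - K))) w = (f ^^ (fact m * K - N)) w"
        by (rule funpow_add_fact_mult_eq[OF assms(5,6) invariant \<open>w \<in> omega_limit f z\<close>])
      then show ?thesis
        using w[of "(fact m * K - N) + fact m * (k - K)"] unfolding k by simp
    qed
    show "\<exists>M. \<forall>a\<ge>M. \<forall>b\<ge>M. dist ((f ^^ (fact m * a)) z) ((f ^^ (fact m * b)) z) < e"
      by (intro exI[of _ K] allI impI) (rule dist_triangle_half_l[OF near near])
  qed
  moreover have "\<forall>k. (f ^^ (fact m * k)) z \<in> X"
    using funpow_mem_invariant[OF assms(2,4)] by blast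
  ultimately show ?thesis
    using that completeE[OF compact_imp_complete[OF assms(1)]] by metis
qed

abbreviation pointwise_topology :: "'a::topological_space set \<Rightarrow> ('a \<Rightarrow> 'a) topology" where
  "pointwise_topology X \<equiv> product_topology (\<lambda>_. top_of_set X) X"

lemma closure_of_iterates_apply:
  assumes "p \<in> pointwise_topology X closure_of ((\<lambda>n. restrict (f ^^ n) X) ` S)"
    and "z \<in> X"
  shows "p z \<in> closure ((\<lambda>n. (f ^^ n) z) ` S)"
proof -
  have "continuous_map (pointwise_topology X) (top_of_set X) (\<lambda>q. q z)"
    using assms(2) by (rule continuous_map_product_projection)
  then have "p z \<in> top_of_set X closure_of ((\<lambda>q. q z) ` (\<lambda>n. restrict (f ^^ n) X) ` S)"
    using assms(1) continuous_map_image_closure_subset by fastforce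
  also have "\<dots> \<subseteq> closure ((\<lambda>n. (f ^^ n) z) ` S)"
    using closure_of_subtopology_subset[of euclidean X] assms(2) by (simp add: image_image)
  finally show ?thesis .
qed

lemma closure_of_iterates_commute:
  fixes X :: "'a::metric_space set"
  assumes "continuous_on X f" "f ` X \<subseteq> X" "x \<in> X"
    and "p \<in> pointwise_topology X closure_of ((\<lambda>n. restrict (f ^^ n) X) ` S)"
  shows "p ((f ^^ k) x) = (f ^^ k) (p x)"
proof -
  have fk: "continuous_map (top_of_set X) (top_of_set X) (f ^^ k)"
    using assms(1,2) by (intro continuous_map_funpow) (simp add: image_subset_iff_funcset)
  have "(f ^^ k) x \<in> X"
    using funpow_mem_invariant[OF assms(2,3)] .
  show ?thesis
  proof (rule forall_in_closure_of_eq[OF assms(4)])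
    show "Hausdorff_space (top_of_set X)"
      by (simp add: Hausdorff_space_subtopology)
    show "continuous_map (pointwise_topology X) (top_of_set X) (\<lambda>q. q ((f ^^ k) x))"
      using \<open>(f ^^ k) x \<in> X\<close> by (rule continuous_map_product_projection)
    show "continuous_map (pointwise_topology X) (top_of_set X) (\<lambda>q. (f ^^ k) (q x))"
      using continuous_map_compose[OF continuous_map_product_projection[OF assms(3)] fk]
      by (simp add: o_def)
    show "q ((f ^^ k) x) = (f ^^ k) (q x)" if "q \<in> (\<lambda>n. restrict (f ^^ n) X) ` S" for q
      using that assms(3) \<open>(f ^^ k) x \<in> X\<close> by clarsimp (metis add.commute comp_apply funpow_add)
  qed
qed

lemma nat_decompose_residue_tails:
  assumes "(L::nat) > 0"
  shows "UNIV = {..<L * N} \<union> (\<Union>i<L. (\<lambda>k. L * k + i) ` {N..})"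
proof -
  have "n \<in> (\<lambda>k. L * k + n mod L) ` {N..}" if "L * N \<le> n" for n
  proof
    show "n = L * (n div L) + n mod L" by simp
    show "n div L \<in> {N..}"
      using that assms by (simp add: less_eq_div_iff_mult_less_eq mult.commute)
  qed
  then show ?thesis
    using assms by (auto simp: not_less) (meson lessThan_iff mod_less_divisor not_le)
qed

lemma closure_of_iterates_in_residue_class:
  fixes X :: "'a::metric_space set"
  assumes "L > 0"
    and p: "p \<in> pointwise_topology X closure_of range (\<lambda>n. restrict (f ^^ n) X)"
    and not_iterate: "p \<notin> range (\<lambda>n. restrict (f ^^ n) X)"
  shows "\<exists>i<L. \<forall>N. p \<in> pointwise_topology X closure_of
                        ((\<lambda>n. restrict (f ^^ n) X) ` (\<lambda>k. L * k + i) ` {N..})"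
proof -
  define g where "g n = restrict (f ^^ n) X" for n
  define C where "C N i = pointwise_topology X closure_of (g ` (\<lambda>k. L * k + i) ` {N..})" for N i
  have "t1_space (pointwise_topology X)"
    by (simp add: Hausdorff_imp_t1_space Hausdorff_space_product_topology
        Hausdorff_space_subtopology)
  have finite_closed: "pointwise_topology X closure_of (g ` {..<n}) \<subseteq> range g" for n
  proof -
    have "pointwise_topology X closure_of (g ` {..<n})
          = pointwise_topology X closure_of (topspace (pointwise_topology X) \<inter> g ` {..<n})"
      by (rule closure_of_restrict)
    also have "\<dots> = topspace (pointwise_topology X) \<inter> g ` {..<n}"
      using \<open>t1_space (pointwise_topology X)\<close> by (simp add: closure_of_eq t1_space_closedin_finite)
    finally show ?thesis
      by blast
  qed
  have some_class: "\<exists>i<L. p \<in> C N i" for N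
  proof -
    have "range g = g ` {..<L * N} \<union> (\<Union>i<L. g ` (\<lambda>k. L * k + i) ` {N..})"
      by (subst nat_decompose_residue_tails[OF assms(1), of N]) (simp add: image_Un image_UN)
    then have "p \<in> pointwise_topology X closure_of (g ` {..<L * N}) \<union> (\<Union>i<L. C N i)"
      using p by (simp add: g_def[abs_def] C_def closure_of_Union image_image)
    then show ?thesis
      using finite_closed not_iterate unfolding g_def[abs_def] by blast
  qed
  have antimono: "C N' i \<subseteq> C N i" if "N \<le> N'" for N N' i
    unfolding C_def using that by (intro closure_of_mono image_mono) auto
  show ?thesis
  proof (rule ccontr)
    assume "\<not> ?thesis"
    then obtain N where N: "\<And>i. i < L \<Longrightarrow> p \<notin> C (N i) i"
      unfolding C_def g_def[abs_def] by metis
    obtain i where "i < L" "p \<in> C (Max (N ` {..<L})) i"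
      using some_class by blast
    then show False
      using N antimono[of "N i" "Max (N ` {..<L})" i] by auto
  qed
qed

lemma eq_limit_if_in_closure_tails:
  fixes s :: "nat \<Rightarrow> 'a::metric_space"
  assumes lim: "s \<longlonglongrightarrow> l" and tails: "\<And>N. y \<in> closure (s ` {N..})"
  shows "y = l"
proof -
  have "dist y l \<le> 0 + e" if "e > 0" for e
  proof -
    obtain N where "\<And>n. N \<le> n \<Longrightarrow> dist (s n) l < e"
      using tendstoD[OF lim \<open>e > 0\<close>] unfolding eventually_sequentially by blast
    then have "s ` {N..} \<subseteq> cball l e"
      by (auto simp: dist_commute less_imp_le)
    then have "closure (s ` {N..}) \<subseteq> cball l e"
      by (rule closure_minimal) simp
    then show ?thesis
      using tails[of N] by (auto simp: dist_commute)
  qed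
  then have "dist y l \<le> 0"
    by (rule field_le_epsilon)
  then show ?thesis
    by simp
qed

lemma closure_of_residue_tails_apply_eq_limit:
  fixes X :: "'a::metric_space set"
  assumes "continuous_on X f" "f ` X \<subseteq> X" "z \<in> X" "l \<in> X"
    and lim: "(\<lambda>k. (f ^^ (L * k)) z) \<longlonglongrightarrow> l"
    and tails: "\<And>N. p \<in> pointwise_topology X closure_of
                        ((\<lambda>n. restrict (f ^^ n) X) ` (\<lambda>k. L * k + i) ` {N..})"
  shows "p z = (f ^^ i) l"
proof (rule eq_limit_if_in_closure_tails)
  have "continuous_on X (f ^^ i)"
    using continuous_map_funpow[of "top_of_set X" f i] assms(1,2)
    by (simp add: image_subset_iff_funcset)
  then have "(\<lambda>k. (f ^^ i) ((f ^^ (L * k)) z)) \<longlonglongrightarrow> (f ^^ i) l"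
    by (rule continuous_on_tendsto_compose[OF _ lim \<open>l \<in> X\<close>])
      (simp add: funpow_mem_invariant[OF assms(2,3)])
  then show "(\<lambda>k. (f ^^ (L * k + i)) z) \<longlonglongrightarrow> (f ^^ i) l"
    by (simp add: funpow_add add.commute)
  show "p z \<in> closure ((\<lambda>k. (f ^^ (L * k + i)) z) ` {N..})" for N
    using closure_of_iterates_apply[OF tails \<open>z \<in> X\<close>] by (simp add: image_image)
qed

lemma ellis_semigroup_eq_closure_of_range:
  "ellis_semigroup X f = pointwise_topology X closure_of range (\<lambda>n. restrict (f ^^ n) X)"
  by (simp add: ellis_semigroup_def full_SetCompr_eq)

lemma ellis_semigroup_subset_PiE: "ellis_semigroup X f \<subseteq> (\<Pi>\<^sub>E z\<in>X. X)"
  using closure_of_subset_topspace[of "pointwise_topology X"]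
  by (simp add: ellis_semigroup_eq_closure_of_range)

lemma ellis_semigroup_non_iterate_apply:
  fixes X :: "'a::metric_space set"
  assumes "continuous_on X f" "f ` X \<subseteq> X" "L > 0" "Z \<subseteq> X"
    and conv: "\<And>z. z \<in> Z \<Longrightarrow> \<exists>l\<in>X. (\<lambda>k. (f ^^ (L * k)) z) \<longlonglongrightarrow> l"
    and p: "p \<in> ellis_semigroup X f" "p \<notin> range (\<lambda>n. restrict (f ^^ n) X)"
  shows "\<exists>i<L. \<forall>z\<in>Z. p z = (f ^^ i) (lim (\<lambda>k. (f ^^ (L * k)) z))"
proof -
  obtain i where "i < L" and tails: "\<And>N. p \<in> pointwise_topology X closure_of
                    ((\<lambda>n. restrict (f ^^ n) X) ` (\<lambda>k. L * k + i) ` {N..})"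
    using closure_of_iterates_in_residue_class[OF \<open>L > 0\<close> _ p(2)]
      p(1)[unfolded ellis_semigroup_eq_closure_of_range]
    by blast
  have "p z = (f ^^ i) (lim (\<lambda>k. (f ^^ (L * k)) z))" if "z \<in> Z" for z
  proof -
    obtain l where "l \<in> X" and lim: "(\<lambda>k. (f ^^ (L * k)) z) \<longlonglongrightarrow> l"
      using conv[OF \<open>z \<in> Z\<close>] by blast
    have "z \<in> X"
      using \<open>Z \<subseteq> X\<close> \<open>z \<in> Z\<close> by blast
    from assms(1,2) this \<open>l \<in> X\<close> lim tails
    have "p z = (f ^^ i) l"
      by (rule closure_of_residue_tails_apply_eq_limit)
    then show ?thesis
      using limI[OF lim] by simp
  qed
  with \<open>i < L\<close> show ?thesis
    by blast
qed

lemma countable_ellis_semigroup_if_convergent_off_orbit: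
  fixes X :: "'a::metric_space set"
  assumes "countable X" "f ` X \<subseteq> X" "continuous_on X f" "x0 \<in> X" "L > 0"
    and conv: "\<And>z. z \<in> X - range (\<lambda>n. (f ^^ n) x0) \<Longrightarrow>
                 \<exists>l\<in>X. (\<lambda>k. (f ^^ (L * k)) z) \<longlonglongrightarrow> l"
  shows "countable (ellis_semigroup X f)"
proof -
  define \<Phi> where "\<Phi> = (\<lambda>(y, i). \<lambda>z\<in>X.
    if z \<in> range (\<lambda>n. (f ^^ n) x0) then (f ^^ (SOME n. z = (f ^^ n) x0)) y
    else (f ^^ i) (lim (\<lambda>k. (f ^^ (L * k)) z)))"
  have "p \<in> range (\<lambda>n. restrict (f ^^ n) X) \<union> \<Phi> ` (X \<times> {..<L})"
    if p: "p \<in> ellis_semigroup X f" for p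
  proof (cases "p \<in> range (\<lambda>n. restrict (f ^^ n) X)")
    case False
    obtain i where "i < L"
      and off_orbit: "\<forall>z\<in>X - range (\<lambda>n. (f ^^ n) x0).
                        p z = (f ^^ i) (lim (\<lambda>k. (f ^^ (L * k)) z))"
      using ellis_semigroup_non_iterate_apply[OF assms(3,2,5) Diff_subset conv p False] by blast
    have "p \<in> (\<Pi>\<^sub>E z\<in>X. X)"
      by (rule subsetD[OF ellis_semigroup_subset_PiE p])
    then have "p \<in> extensional X" "p x0 \<in> X"
      using \<open>x0 \<in> X\<close> by (auto simp: PiE_iff)
    have "p z = \<Phi> (p x0, i) z" if "z \<in> X" for z
    proof (cases "z \<in> range (\<lambda>n. (f ^^ n) x0)")
      case True
      define n where "n = (SOME n. z = (f ^^ n) x0)"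
      from True obtain k where "z = (f ^^ k) x0"
        by blast
      then have "z = (f ^^ n) x0"
        unfolding n_def by (rule someI)
      then have "p z = (f ^^ n) (p x0)"
        using closure_of_iterates_commute[OF assms(3,2,4)]
          p[unfolded ellis_semigroup_eq_closure_of_range]
        by simp
      moreover have "\<Phi> (p x0, i) z = (f ^^ n) (p x0)"
        using True \<open>z \<in> X\<close> unfolding \<Phi>_def n_def by simp
      ultimately show ?thesis
        by simp
    next
      case False
      then show ?thesis
        using off_orbit \<open>z \<in> X\<close> unfolding \<Phi>_def by simp
    qed
    then have "p = \<Phi> (p x0, i)"
      by (intro extensionalityI[OF \<open>p \<in> extensional X\<close>]) (simp_all add: \<Phi>_def)
    then show ?thesis
      using \<open>p x0 \<in> X\<close> \<open>i < L\<close> by (intro UnI2 image_eqI) auto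
  qed simp
  moreover have "countable (range (\<lambda>n. restrict (f ^^ n) X) \<union> \<Phi> ` (X \<times> {..<L}))"
    using assms(1) by (simp add: countable_SIGMA)
  ultimately show ?thesis
    by (meson countable_subset subsetI)
qed

theorem theorem4p4:
  fixes X :: "'a::metric_space set" and f :: "'a \<Rightarrow> 'a" and m :: nat
  assumes "compact X" and "countable X"
    and "f ` X \<subseteq> X" and "continuous_on X f"
    and "transitive_system X f"
    and "\<forall>x\<in>X. x islimpt X \<longrightarrow> finite (omega_limit f x) \<and> card (omega_limit f x) \<le> m"
  shows "countable (ellis_semigroup X f)"
proof -
  obtain x0 where "x0 \<in> X" and dense: "closure (range (\<lambda>n. (f ^^ n) x0)) = closure X"
    using assms(5) unfolding transitive_system_def by (auto simp: full_SetCompr_eq)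
  have conv: "\<exists>l\<in>X. (\<lambda>k. (f ^^ (fact m * k)) z) \<longlonglongrightarrow> l"
    if "z \<in> X - range (\<lambda>n. (f ^^ n) x0)" for z
  proof -
    have "z islimpt range (\<lambda>n. (f ^^ n) x0)"
      using that dense closure_subset unfolding closure_def by blast
    then have "z islimpt X"
      using funpow_mem_invariant[OF assms(3) \<open>x0 \<in> X\<close>] islimpt_subset by blast
    then show ?thesis
      using convergent_funpow_fact_mult[OF assms(1,3,4)] assms(6) that by (metis DiffD1)
  qed
  show ?thesis
    using assms(2-4) \<open>x0 \<in> X\<close> fact_gt_zero conv
    by (rule countable_ellis_semigroup_if_convergent_off_orbit)
qed

end
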